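(* Let $A,B,C$ be non-degenerate square $\{0,1\}$-matrices and let $\varphi_1:X_A\to X_B$, $\varphi_2:X_B\to X_C$, $\varphi_3:X_A\to X_C$ be elementary conjugacies. Set $R_i=R_{\varphi_i}$, $S_i=S_{\varphi_i}$ for $i=1,2,3$. Then $\varphi_2\circ\varphi_1=\varphi_3$ if and only if $R_1R_2=R_3$, $R_2S_3=S_1$ and $S_3R_1=S_2$.
   Context: Non-degenerate: no zero rows or columns; products are integer matrix products. $X_A=\{x\in\{1,\dots,m\}^{\mathbb Z}:A_{x_\ell,x_{\ell+1}}=1\ \forall\ell\}$ with the left shift; a conjugacy is a shift-commuting homeomorphism. A conjugacy $\varphi:X_A\to X_B$ is elementary if there are $\varphi_{\mathrm{loc}}$ (on pairs $(a,a')$ with $A_{a,a'}=1$) and $\varphi^{-1}_{\mathrm{loc}}$ (on pairs $(b,b')$ with $B_{b,b'}=1$) with $\varphi(x)_i=\varphi_{\mathrm{loc}}(x_i,x_{i+1})$ and $\varphi^{-1}(y)_i=\varphi^{-1}_{\mathrm{loc}}(y_{i-1},y_i)$. For such $\varphi$, $R_\varphi$ is the $\{0,1\}$-matrix with $(R_\varphi)_{a,b}=1$ iff $\varphi_{\mathrm{loc}}(a,a')=b$ for some allowed $a'$, and $S_\varphi$ is the $\{0,1\}$-matrix with $(S_\varphi)_{b,a}=1$ iff $\varphi^{-1}_{\mathrm{loc}}(b,b')=a$ for some allowed $b'$. *)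

theory Defs
  imports "HOL-Analysis.Analysis" "Jordan_Normal_Form.Matrix"
begin

definition zero_one_mat :: "int mat \<Rightarrow> bool" where
  "zero_one_mat A \<longleftrightarrow> (\<forall>i<dim_row A. \<forall>j<dim_col A. A $$ (i,j) \<in> {0,1})"

definition nondegenerate :: "int mat \<Rightarrow> bool" where
  "nondegenerate A \<longleftrightarrow>
     (\<forall>i<dim_row A. \<exists>j<dim_col A. A $$ (i,j) \<noteq> 0) \<and>
     (\<forall>j<dim_col A. \<exists>i<dim_row A. A $$ (i,j) \<noteq> 0)"

definition square_01_nondeg :: "int mat \<Rightarrow> bool" where
  "square_01_nondeg A \<longleftrightarrow> dim_row A = dim_col A \<and> zero_one_mat A \<and> nondegenerate A"

definition shift_space :: "int mat \<Rightarrow> (int \<Rightarrow> nat) set" where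
  "shift_space A = {x. \<forall>l. x l < dim_row A \<and> x (l+1) < dim_row A \<and> A $$ (x l, x (l+1)) = 1}"

definition shift :: "(int \<Rightarrow> nat) \<Rightarrow> (int \<Rightarrow> nat)" where
  "shift x = (\<lambda>i. x (i+1))"

definition seq_top :: "(int \<Rightarrow> nat) topology" where
  "seq_top = product_topology (\<lambda>_. discrete_topology UNIV) UNIV"

definition shift_top :: "int mat \<Rightarrow> (int \<Rightarrow> nat) topology" where
  "shift_top A = subtopology seq_top (shift_space A)"

definition conjugacy :: "int mat \<Rightarrow> int mat \<Rightarrow> ((int \<Rightarrow> nat) \<Rightarrow> (int \<Rightarrow> nat)) \<Rightarrow> bool" where
  "conjugacy A B \<phi> \<longleftrightarrow> homeomorphic_map (shift_top A) (shift_top B) \<phi> \<and>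
     (\<forall>x\<in>shift_space A. \<phi> (shift x) = shift (\<phi> x))"

definition elementary_rules ::
  "int mat \<Rightarrow> int mat \<Rightarrow> ((int \<Rightarrow> nat) \<Rightarrow> (int \<Rightarrow> nat)) \<Rightarrow> (nat \<Rightarrow> nat \<Rightarrow> nat) \<Rightarrow> (nat \<Rightarrow> nat \<Rightarrow> nat) \<Rightarrow> bool" where
  "elementary_rules A B \<phi> f g \<longleftrightarrow> conjugacy A B \<phi> \<and>
     (\<forall>x\<in>shift_space A. \<forall>i. \<phi> x i = f (x i) (x (i+1))) \<and>
     (\<forall>y\<in>shift_space B. \<forall>i. the_inv_into (shift_space A) \<phi> y i = g (y (i-1)) (y i))"

definition elementary_conjugacy :: "int mat \<Rightarrow> int mat \<Rightarrow> ((int \<Rightarrow> nat) \<Rightarrow> (int \<Rightarrow> nat)) \<Rightarrow> bool" where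
  "elementary_conjugacy A B \<phi> \<longleftrightarrow> (\<exists>f g. elementary_rules A B \<phi> f g)"

definition loc_rule where
  "loc_rule A B \<phi> = (SOME f. \<exists>g. elementary_rules A B \<phi> f g)"

definition inv_loc_rule where
  "inv_loc_rule A B \<phi> = (SOME g. \<exists>f. elementary_rules A B \<phi> f g)"

definition R_mat :: "int mat \<Rightarrow> int mat \<Rightarrow> ((int \<Rightarrow> nat) \<Rightarrow> (int \<Rightarrow> nat)) \<Rightarrow> int mat" where
  "R_mat A B \<phi> = mat (dim_row A) (dim_row B) (\<lambda>(a,b).
     if \<exists>a'<dim_row A. A $$ (a,a') = 1 \<and> loc_rule A B \<phi> a a' = b then 1 else 0)"

definition S_mat :: "int mat \<Rightarrow> int mat \<Rightarrow> ((int \<Rightarrow> nat) \<Rightarrow> (int \<Rightarrow> nat)) \<Rightarrow> int mat" where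
  "S_mat A B \<phi> = mat (dim_row B) (dim_row A) (\<lambda>(b,a).
     if \<exists>b'<dim_row B. B $$ (b,b') = 1 \<and> inv_loc_rule A B \<phi> b b' = a then 1 else 0)"

end

theory Submission
  imports Defs
begin

text \<open>
  For x in X_A write the symbols of x, \<phi>1 x and \<phi>3 x as one sequence
  ..., x_i, (\<phi>1 x)_i, (\<phi>3 x)_i, x_(i+1), ... . An entry of R_\<phi> (resp. S_\<phi>) is 1 exactly when
  the two symbols occur as (x_i, (\<phi> x)_i) (resp. ((\<phi> x)_i, x_(i+1))) for some x.
  If \<phi>2 \<circ> \<phi>1 = \<phi>3, two such interleaved sequences agreeing at one position can be glued there,
  and every symbol is determined by the symbols two places before and one place after it.
  Hence two realised adjacent pairs sharing a symbol are realised by one sequence, and the middle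
  symbol of a realised triple is determined by the outer two; for 0/1-matrices this is what the
  identities R1 R2 = R3, R2 S3 = S1 and S3 R1 = S2 say. Conversely, R_\<phi>(a,b) = 1 and S_\<phi>(b,a') = 1 force
  \<phi>_loc(a,a') = b; chasing x_i, (\<phi>1 x)_i and x_(i+1) through the three identities then
  yields (\<phi>2 (\<phi>1 x))_i = (\<phi>3 x)_i.
\<close>

definition glue :: "int \<Rightarrow> (int \<Rightarrow> 'a) \<Rightarrow> (int \<Rightarrow> 'a) \<Rightarrow> int \<Rightarrow> 'a" where
  "glue k x x' = (\<lambda>i. if i \<le> k then x i else x' i)"

lemma glue_le [simp]: "i \<le> k \<Longrightarrow> glue k x x' i = x i"
  by (simp add: glue_def)

lemma glue_gt [simp]: "k < i \<Longrightarrow> glue k x x' i = x' i"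
  by (simp add: glue_def)

lemma shift_space_lt: "x \<in> shift_space A \<Longrightarrow> x i < dim_row A"
  by (simp add: shift_space_def)

lemma shift_space_edge: "x \<in> shift_space A \<Longrightarrow> A $$ (x i, x (i+1)) = 1"
  by (simp add: shift_space_def)

lemma glue_in_shift_space:
  assumes "x \<in> shift_space A" "x' \<in> shift_space A" "x k = x' k"
  shows "glue k x x' \<in> shift_space A"
proof -
  have "glue k x x' l < dim_row A \<and> A $$ (glue k x x' l, glue k x x' (l+1)) = 1" for l
  proof (cases "l < k")
    case True
    then show ?thesis using assms(1) by (simp add: shift_space_lt shift_space_edge)
  next
    case False
    then have "glue k x x' l = x' l" using assms(3) by (simp add: glue_def)
    then show ?thesis using False assms(2) by (simp add: shift_space_lt shift_space_edge)
  qed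
  then show ?thesis by (simp add: shift_space_def)
qed

lemma biinfinite_walk_through_edge:
  fixes E :: "'a \<Rightarrow> 'a \<Rightarrow> bool" and k :: int
  assumes succ: "\<And>i. i \<in> S \<Longrightarrow> \<exists>j\<in>S. E i j"
    and pred: "\<And>j. j \<in> S \<Longrightarrow> \<exists>i\<in>S. E i j"
    and edge: "a \<in> S" "a' \<in> S" "E a a'"
  shows "\<exists>x. (\<forall>l. x l \<in> S \<and> E (x l) (x (l+1))) \<and> x k = a \<and> x (k+1) = a'"
proof -
  obtain nxt where nxt: "\<And>i. i \<in> S \<Longrightarrow> nxt i \<in> S \<and> E i (nxt i)"
    using succ by metis
  obtain prv where prv: "\<And>j. j \<in> S \<Longrightarrow> prv j \<in> S \<and> E (prv j) j"
    using pred by metis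
  have nxt_in: "(nxt ^^ m) a' \<in> S" and prv_in: "(prv ^^ m) a \<in> S" for m
    by (induction m) (auto simp: edge nxt prv)
  define x where
    "x l = (if k < l then (nxt ^^ nat (l - k - 1)) a' else (prv ^^ nat (k - l)) a)" for l
  have "E (x l) (x (l+1))" for l
  proof (cases "k < l")
    case True
    then have "nat (l + 1 - k - 1) = Suc (nat (l - k - 1))" by auto
    then show ?thesis using True nxt[OF nxt_in] by (simp add: x_def)
  next
    case False
    show ?thesis
    proof (cases "l = k")
      case True
      then show ?thesis by (simp add: x_def edge)
    next
      case False
      with \<open>\<not> k < l\<close> have "nat (k - l) = Suc (nat (k - (l+1)))" by auto
      then show ?thesis using False \<open>\<not> k < l\<close> prv[OF prv_in] by (simp add: x_def)
    qed
  qed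
  moreover have "x l \<in> S" for l
    using nxt_in prv_in by (simp add: x_def)
  moreover have "x k = a" "x (k+1) = a'"
    by (simp_all add: x_def)
  ultimately show ?thesis by blast
qed

lemma shift_space_through_edge:
  assumes "square_01_nondeg A" "a < dim_row A" "a' < dim_row A" "A $$ (a,a') = 1"
  shows "\<exists>x\<in>shift_space A. x k = a \<and> x (k+1) = a'"
proof -
  have entry_eq_1: "A $$ (i,j) = 1" if "i < dim_row A" "j < dim_row A" "A $$ (i,j) \<noteq> 0" for i j
    using assms(1) that unfolding square_01_nondeg_def zero_one_mat_def by fastforce
  have "\<exists>x. (\<forall>l. x l \<in> {..<dim_row A} \<and> A $$ (x l, x (l+1)) = 1) \<and> x k = a \<and> x (k+1) = a'"
  proof (rule biinfinite_walk_through_edge)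
    show "\<exists>j\<in>{..<dim_row A}. A $$ (i,j) = 1" if i: "i \<in> {..<dim_row A}" for i
    proof -
      obtain j where "j < dim_row A" "A $$ (i,j) \<noteq> 0"
        using assms(1) i unfolding square_01_nondeg_def nondegenerate_def by auto
      then show ?thesis using entry_eq_1 i by auto
    qed
    show "\<exists>i\<in>{..<dim_row A}. A $$ (i,j) = 1" if j: "j \<in> {..<dim_row A}" for j
    proof -
      obtain i where "i < dim_row A" "A $$ (i,j) \<noteq> 0"
        using assms(1) j unfolding square_01_nondeg_def nondegenerate_def by auto
      then show ?thesis using entry_eq_1 j by auto
    qed
  qed (use assms(2-4) in auto)
  then show ?thesis unfolding shift_space_def by auto
qed

lemma zero_one_mult_entry:
  assumes "zero_one_mat P" "zero_one_mat Q" "dim_col P = dim_row Q"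
    and "i < dim_row P" "k < dim_col Q"
  shows "(P * Q) $$ (i,k) = int (card {j. j < dim_col P \<and> P $$ (i,j) = 1 \<and> Q $$ (j,k) = 1})"
proof -
  have "(P * Q) $$ (i,k) = (\<Sum>j<dim_col P. P $$ (i,j) * Q $$ (j,k))"
    using assms(3-5) by (simp add: scalar_prod_def atLeast0LessThan)
  also have "\<dots> = (\<Sum>j<dim_col P. of_bool (P $$ (i,j) = 1 \<and> Q $$ (j,k) = 1))"
    using assms unfolding zero_one_mat_def by (intro sum.cong) auto
  also have "\<dots> = int (card {j. j < dim_col P \<and> P $$ (i,j) = 1 \<and> Q $$ (j,k) = 1})"
    by (simp add: Int_def)
  finally show ?thesis .
qed

lemma zero_one_mult_eq_iff:
  assumes "zero_one_mat P" "zero_one_mat Q" "zero_one_mat M"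
    and "dim_col P = dim_row Q" "dim_row M = dim_row P" "dim_col M = dim_col Q"
  shows "P * Q = M \<longleftrightarrow> (\<forall>i<dim_row P. \<forall>k<dim_col Q.
     (M $$ (i,k) = 1 \<longleftrightarrow> (\<exists>j<dim_col P. P $$ (i,j) = 1 \<and> Q $$ (j,k) = 1)) \<and>
     (\<forall>j<dim_col P. \<forall>j'<dim_col P.
        P $$ (i,j) = 1 \<and> Q $$ (j,k) = 1 \<and> P $$ (i,j') = 1 \<and> Q $$ (j',k) = 1 \<longrightarrow> j = j'))"
proof -
  have card_iff: "int (card J) = c \<longleftrightarrow> (c = 1 \<longleftrightarrow> J \<noteq> {}) \<and> (\<forall>j\<in>J. \<forall>j'\<in>J. j = j')"
    if "c = 0 \<or> c = 1" "finite J" for c :: int and J :: "nat set"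
  proof -
    have "card J = 1 \<longleftrightarrow> J \<noteq> {} \<and> (\<forall>j\<in>J. \<forall>j'\<in>J. j = j')"
      using card_1_singleton_iff[of J] by auto
    then show ?thesis
      using that by auto
  qed
  have entry_iff: "M $$ (i,k) = (P * Q) $$ (i,k) \<longleftrightarrow>
     (M $$ (i,k) = 1 \<longleftrightarrow> (\<exists>j<dim_col P. P $$ (i,j) = 1 \<and> Q $$ (j,k) = 1)) \<and>
     (\<forall>j<dim_col P. \<forall>j'<dim_col P.
        P $$ (i,j) = 1 \<and> Q $$ (j,k) = 1 \<and> P $$ (i,j') = 1 \<and> Q $$ (j',k) = 1 \<longrightarrow> j = j')"
    if "i < dim_row P" "k < dim_col Q" for i k
  proof -
    let ?J = "{j. j < dim_col P \<and> P $$ (i,j) = 1 \<and> Q $$ (j,k) = 1}"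
    have "M $$ (i,k) = 0 \<or> M $$ (i,k) = 1"
      using assms(3,5,6) that unfolding zero_one_mat_def by auto
    then have "int (card ?J) = M $$ (i,k) \<longleftrightarrow>
        (M $$ (i,k) = 1 \<longleftrightarrow> ?J \<noteq> {}) \<and> (\<forall>j\<in>?J. \<forall>j'\<in>?J. j = j')"
      by (intro card_iff) auto
    then show ?thesis
      using zero_one_mult_entry[OF assms(1,2,4) that] by auto
  qed
  have "P * Q = M \<longleftrightarrow> (\<forall>i<dim_row P. \<forall>k<dim_col Q. M $$ (i,k) = (P * Q) $$ (i,k))"
    using assms(4-6) by (auto intro!: eq_matI)
  also have "\<dots> \<longleftrightarrow> (\<forall>i<dim_row P. \<forall>k<dim_col Q.
     (M $$ (i,k) = 1 \<longleftrightarrow> (\<exists>j<dim_col P. P $$ (i,j) = 1 \<and> Q $$ (j,k) = 1)) \<and>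
     (\<forall>j<dim_col P. \<forall>j'<dim_col P.
        P $$ (i,j) = 1 \<and> Q $$ (j,k) = 1 \<and> P $$ (i,j') = 1 \<and> Q $$ (j',k) = 1 \<longrightarrow> j = j'))"
    using entry_iff by (simp del: index_mult_mat)
  finally show ?thesis .
qed

lemma realized_consecutive_entries_iff:
  fixes P Q :: "int mat" and W :: "(int \<Rightarrow> nat) set"
  assumes dim: "dim_col P = dim_row Q"
    and glue: "\<And>w w'. w \<in> W \<Longrightarrow> w' \<in> W \<Longrightarrow> w (q+1) = w' (q+1) \<Longrightarrow> glue (q+1) w w' \<in> W"
    and P: "\<And>i j. i < dim_row P \<Longrightarrow> j < dim_col P \<Longrightarrow>
      P $$ (i,j) = 1 \<longleftrightarrow> (\<exists>w\<in>W. w q = i \<and> w (q+1) = j)"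
    and Q: "\<And>j k. j < dim_row Q \<Longrightarrow> k < dim_col Q \<Longrightarrow>
      Q $$ (j,k) = 1 \<longleftrightarrow> (\<exists>w\<in>W. w (q+1) = j \<and> w (q+2) = k)"
    and ijk: "i < dim_row P" "j < dim_col P" "k < dim_col Q"
  shows "P $$ (i,j) = 1 \<and> Q $$ (j,k) = 1 \<longleftrightarrow> (\<exists>w\<in>W. w q = i \<and> w (q+1) = j \<and> w (q+2) = k)"
proof
  assume "P $$ (i,j) = 1 \<and> Q $$ (j,k) = 1"
  then obtain w w' where w: "w \<in> W" "w q = i" "w (q+1) = j"
    and w': "w' \<in> W" "w' (q+1) = j" "w' (q+2) = k"
    using P[OF ijk(1,2)] Q[of j k] ijk dim by auto
  then have "glue (q+1) w w' \<in> W"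
    using glue by simp
  then show "\<exists>w\<in>W. w q = i \<and> w (q+1) = j \<and> w (q+2) = k"
    using w w' by (intro bexI[of _ "glue (q+1) w w'"]) auto
qed (use P Q ijk dim in auto)

lemma zero_one_mult_eq_if_realized:
  fixes P Q M :: "int mat" and W :: "(int \<Rightarrow> nat) set"
  assumes "zero_one_mat P" "zero_one_mat Q" "zero_one_mat M"
    and dims: "dim_col P = dim_row Q" "dim_row M = dim_row P" "dim_col M = dim_col Q"
    and range: "\<And>w. w \<in> W \<Longrightarrow> w (q+1) < dim_row Q"
    and glue: "\<And>w w'. w \<in> W \<Longrightarrow> w' \<in> W \<Longrightarrow> w (q+1) = w' (q+1) \<Longrightarrow> glue (q+1) w w' \<in> W"
    and middle: "\<And>w w'. w \<in> W \<Longrightarrow> w' \<in> W \<Longrightarrow> w q = w' q \<Longrightarrow> w (q+2) = w' (q+2) \<Longrightarrow>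
      w (q+1) = w' (q+1)"
    and P: "\<And>i j. i < dim_row P \<Longrightarrow> j < dim_col P \<Longrightarrow>
      P $$ (i,j) = 1 \<longleftrightarrow> (\<exists>w\<in>W. w q = i \<and> w (q+1) = j)"
    and Q: "\<And>j k. j < dim_row Q \<Longrightarrow> k < dim_col Q \<Longrightarrow>
      Q $$ (j,k) = 1 \<longleftrightarrow> (\<exists>w\<in>W. w (q+1) = j \<and> w (q+2) = k)"
    and M: "\<And>i k. i < dim_row M \<Longrightarrow> k < dim_col M \<Longrightarrow>
      M $$ (i,k) = 1 \<longleftrightarrow> (\<exists>w\<in>W. w q = i \<and> w (q+2) = k)"
  shows "P * Q = M"
proof (subst zero_one_mult_eq_iff[OF assms(1-6)], intro allI impI conjI)
  fix i k
  assume ik: "i < dim_row P" "k < dim_col Q"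
  have path: "P $$ (i,j) = 1 \<and> Q $$ (j,k) = 1 \<longleftrightarrow> (\<exists>w\<in>W. w q = i \<and> w (q+1) = j \<and> w (q+2) = k)"
    if "j < dim_col P" for j
    by (rule realized_consecutive_entries_iff[OF dims(1)]) (simp_all add: glue P Q ik that)
  show "M $$ (i,k) = 1 \<longleftrightarrow> (\<exists>j<dim_col P. P $$ (i,j) = 1 \<and> Q $$ (j,k) = 1)"
  proof
    assume "M $$ (i,k) = 1"
    then obtain w where "w \<in> W" "w q = i" "w (q+2) = k"
      using M[of i k] ik dims by auto
    moreover have "w (q+1) < dim_col P"
      using range \<open>w \<in> W\<close> dims by simp
    ultimately show "\<exists>j<dim_col P. P $$ (i,j) = 1 \<and> Q $$ (j,k) = 1"
      using path by blast
  next
    assume "\<exists>j<dim_col P. P $$ (i,j) = 1 \<and> Q $$ (j,k) = 1"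
    then obtain w where "w \<in> W" "w q = i" "w (q+2) = k"
      using path by blast
    then show "M $$ (i,k) = 1"
      using M[of i k] ik dims by auto
  qed
  show "j = j'"
    if j: "j < dim_col P" "j' < dim_col P"
      and paths: "P $$ (i,j) = 1 \<and> Q $$ (j,k) = 1 \<and> P $$ (i,j') = 1 \<and> Q $$ (j',k) = 1" for j j'
  proof -
    obtain w where "w \<in> W" "w q = i" "w (q+1) = j" "w (q+2) = k"
      using path[OF j(1)] paths by blast
    moreover obtain w' where "w' \<in> W" "w' q = i" "w' (q+1) = j'" "w' (q+2) = k"
      using path[OF j(2)] paths by blast
    ultimately show "j = j'"
      using middle[of w w'] by simp
  qed
qed

lemma topspace_shift_top [simp]: "topspace (shift_top A) = shift_space A"
  by (simp add: shift_top_def seq_top_def)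

lemma dim_R_mat [simp]:
  "dim_row (R_mat A B \<phi>) = dim_row A" "dim_col (R_mat A B \<phi>) = dim_row B"
  by (simp_all add: R_mat_def)

lemma dim_S_mat [simp]:
  "dim_row (S_mat A B \<phi>) = dim_row B" "dim_col (S_mat A B \<phi>) = dim_row A"
  by (simp_all add: S_mat_def)

lemma zero_one_mat_R_mat: "zero_one_mat (R_mat A B \<phi>)"
  by (simp add: zero_one_mat_def R_mat_def)

lemma zero_one_mat_S_mat: "zero_one_mat (S_mat A B \<phi>)"
  by (simp add: zero_one_mat_def S_mat_def)

locale elem_conj =
  fixes A B :: "int mat" and \<phi> :: "(int \<Rightarrow> nat) \<Rightarrow> int \<Rightarrow> nat"
  assumes square_A: "square_01_nondeg A" and square_B: "square_01_nondeg B"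
    and elementary: "elementary_conjugacy A B \<phi>"
begin

abbreviation \<psi> :: "(int \<Rightarrow> nat) \<Rightarrow> int \<Rightarrow> nat" where
  "\<psi> \<equiv> the_inv_into (shift_space A) \<phi>"

lemma elementary_rules_loc_rule: "elementary_rules A B \<phi> (loc_rule A B \<phi>) (inv_loc_rule A B \<phi>)"
proof -
  have "\<exists>f g. elementary_rules A B \<phi> f g"
    using elementary by (simp add: elementary_conjugacy_def)
  then have "\<exists>g. elementary_rules A B \<phi> (loc_rule A B \<phi>) g"
    unfolding loc_rule_def by (rule someI_ex)
  moreover have "\<exists>g f. elementary_rules A B \<phi> f g"
    using \<open>\<exists>f g. elementary_rules A B \<phi> f g\<close> by blast
  then have "\<exists>f. elementary_rules A B \<phi> f (inv_loc_rule A B \<phi>)"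
    unfolding inv_loc_rule_def by (rule someI_ex)
  ultimately show ?thesis
    unfolding elementary_rules_def by blast
qed

lemma bij_betw_\<phi>: "bij_betw \<phi> (shift_space A) (shift_space B)"
proof -
  have homeo: "homeomorphic_map (shift_top A) (shift_top B) \<phi>"
    using elementary_rules_loc_rule by (simp add: elementary_rules_def conjugacy_def)
  show ?thesis
    using homeomorphic_imp_surjective_map[OF homeo] homeomorphic_imp_injective_map[OF homeo]
    by (simp add: bij_betw_def)
qed

lemma \<phi>_in: "x \<in> shift_space A \<Longrightarrow> \<phi> x \<in> shift_space B"
  by (rule bij_betw_apply[OF bij_betw_\<phi>])

lemma \<psi>_in: "y \<in> shift_space B \<Longrightarrow> \<psi> y \<in> shift_space A"
  using bij_betw_\<phi> unfolding bij_betw_def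
  by (intro the_inv_into_into[of \<phi> "shift_space A" y "shift_space A"]) auto

lemma \<psi>_\<phi> [simp]: "x \<in> shift_space A \<Longrightarrow> \<psi> (\<phi> x) = x"
  using bij_betw_\<phi> unfolding bij_betw_def by (intro the_inv_into_f_f) auto

lemma \<phi>_\<psi> [simp]: "y \<in> shift_space B \<Longrightarrow> \<phi> (\<psi> y) = y"
  using bij_betw_\<phi> unfolding bij_betw_def by (metis f_the_inv_into_f)

lemma \<phi>_apply: "x \<in> shift_space A \<Longrightarrow> \<phi> x i = loc_rule A B \<phi> (x i) (x (i+1))"
  using elementary_rules_loc_rule unfolding elementary_rules_def by blast

lemma \<psi>_apply: "y \<in> shift_space B \<Longrightarrow> \<psi> y i = inv_loc_rule A B \<phi> (y (i-1)) (y i)"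
  using elementary_rules_loc_rule unfolding elementary_rules_def by blast

lemma \<phi>_glue:
  assumes "x \<in> shift_space A" "x' \<in> shift_space A" "x k = x' k"
  shows "\<phi> (glue k x x') = glue (k-1) (\<phi> x) (\<phi> x')"
proof
  fix i
  have "glue k x x' \<in> shift_space A"
    using glue_in_shift_space assms by blast
  moreover have "glue k x x' i = (if i < k then x i else x' i)"
    and "glue k x x' (i+1) = (if i < k then x (i+1) else x' (i+1))"
    using assms(3) by (simp_all add: glue_def)
  ultimately show "\<phi> (glue k x x') i = glue (k-1) (\<phi> x) (\<phi> x') i"
    using assms(1,2) by (simp add: \<phi>_apply glue_def)
qed

lemma \<psi>_glue:
  assumes "y \<in> shift_space B" "y' \<in> shift_space B" "y k = y' k"
  shows "\<psi> (glue k y y') = glue k (\<psi> y) (\<psi> y')"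
proof
  fix i
  have "glue k y y' \<in> shift_space B"
    using glue_in_shift_space assms by blast
  moreover have "glue k y y' (i-1) = (if i \<le> k then y (i-1) else y' (i-1))"
    and "glue k y y' i = (if i \<le> k then y i else y' i)"
    using assms(3) unfolding glue_def by (cases "i = k + 1") auto
  ultimately show "\<psi> (glue k y y') i = glue k (\<psi> y) (\<psi> y') i"
    using assms(1,2) by (simp add: \<psi>_apply glue_def)
qed

lemma R_mat_eq_1_iff:
  assumes "a < dim_row A" "b < dim_row B"
  shows "R_mat A B \<phi> $$ (a,b) = 1 \<longleftrightarrow> (\<exists>x\<in>shift_space A. x k = a \<and> \<phi> x k = b)"
proof
  assume "R_mat A B \<phi> $$ (a,b) = 1"
  then obtain a' where a': "a' < dim_row A" "A $$ (a,a') = 1" "loc_rule A B \<phi> a a' = b"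
    using assms by (auto simp: R_mat_def split: if_splits)
  then obtain x where "x \<in> shift_space A" "x k = a" "x (k+1) = a'"
    using shift_space_through_edge[OF square_A assms(1)] by blast
  then show "\<exists>x\<in>shift_space A. x k = a \<and> \<phi> x k = b"
    using a' by (auto simp: \<phi>_apply)
next
  assume "\<exists>x\<in>shift_space A. x k = a \<and> \<phi> x k = b"
  then obtain x where x: "x \<in> shift_space A" "x k = a" "\<phi> x k = b" by blast
  then have "x (k+1) < dim_row A" "A $$ (a, x (k+1)) = 1" "loc_rule A B \<phi> a (x (k+1)) = b"
    using shift_space_lt[OF x(1)] shift_space_edge[OF x(1), of k] \<phi>_apply[OF x(1), of k]
    by simp_all
  then show "R_mat A B \<phi> $$ (a,b) = 1"
    using assms by (auto simp: R_mat_def)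
qed

lemma S_mat_eq_1_iff:
  assumes "a < dim_row A" "b < dim_row B"
  shows "S_mat A B \<phi> $$ (b,a) = 1 \<longleftrightarrow> (\<exists>x\<in>shift_space A. \<phi> x k = b \<and> x (k+1) = a)"
proof
  assume "S_mat A B \<phi> $$ (b,a) = 1"
  then obtain b' where b': "b' < dim_row B" "B $$ (b,b') = 1" "inv_loc_rule A B \<phi> b b' = a"
    using assms by (auto simp: S_mat_def split: if_splits)
  then obtain y where "y \<in> shift_space B" "y k = b" "y (k+1) = b'"
    using shift_space_through_edge[OF square_B assms(2)] by blast
  then show "\<exists>x\<in>shift_space A. \<phi> x k = b \<and> x (k+1) = a"
    using b' by (intro bexI[of _ "\<psi> y"]) (auto simp: \<psi>_apply \<psi>_in)
next
  assume "\<exists>x\<in>shift_space A. \<phi> x k = b \<and> x (k+1) = a"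
  then obtain x where x: "x \<in> shift_space A" "\<phi> x k = b" "x (k+1) = a" by blast
  then have y: "\<phi> x \<in> shift_space B" "\<psi> (\<phi> x) (k+1) = a"
    by (simp_all add: \<phi>_in)
  then have "\<phi> x (k+1) < dim_row B" "B $$ (b, \<phi> x (k+1)) = 1"
      "inv_loc_rule A B \<phi> b (\<phi> x (k+1)) = a"
    using shift_space_lt[OF y(1)] shift_space_edge[OF y(1), of k] \<psi>_apply[OF y(1), of "k+1"] x
    by simp_all
  then show "S_mat A B \<phi> $$ (b,a) = 1"
    using assms by (auto simp: S_mat_def)
qed

lemma \<phi>_eq_if_R_S:
  assumes "R_mat A B \<phi> $$ (a,b) = 1" "S_mat A B \<phi> $$ (b,a') = 1"
    and "a < dim_row A" "a' < dim_row A" "b < dim_row B"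
    and "x \<in> shift_space A" "x k = a" "x (k+1) = a'"
  shows "\<phi> x k = b"
proof -
  obtain x1 where x1: "x1 \<in> shift_space A" "x1 k = a" "\<phi> x1 k = b"
    using R_mat_eq_1_iff assms(1,3,5) by blast
  obtain x2 where x2: "x2 \<in> shift_space A" "\<phi> x2 k = b" "x2 (k+1) = a'"
    using S_mat_eq_1_iff assms(2,4,5) by blast
  let ?u = "glue k (\<phi> x1) (\<phi> x2)"
  have u: "?u \<in> shift_space B"
    using x1 x2 by (simp add: glue_in_shift_space \<phi>_in)
  have "\<psi> ?u = glue k x1 x2"
    using x1 x2 by (simp add: \<psi>_glue \<phi>_in)
  then have "\<psi> ?u k = a" "\<psi> ?u (k+1) = a'"
    using x1 x2 by simp_all
  then have "\<phi> x k = \<phi> (\<psi> ?u) k"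
    using assms(6-8) \<psi>_in[OF u] by (simp add: \<phi>_apply)
  also have "\<dots> = b"
    using x1 u by simp
  finally show ?thesis .
qed

end

lemma int_cases_mod3:
  fixes r :: int
  obtains i where "r = 3*i" | i where "r = 3*i+1" | i where "r = 3*i+2"
proof -
  have "r mod 3 = 0 \<or> r mod 3 = 1 \<or> r mod 3 = 2" by presburger
  then show ?thesis using that div_mult_mod_eq[of r 3] by (metis add.right_neutral mult.commute)
qed

definition interleave3 :: "(int \<Rightarrow> 'a) \<Rightarrow> (int \<Rightarrow> 'a) \<Rightarrow> (int \<Rightarrow> 'a) \<Rightarrow> int \<Rightarrow> 'a" where
  "interleave3 x y z r =
     (if r mod 3 = 0 then x (r div 3) else if r mod 3 = 1 then y (r div 3) else z (r div 3))"

lemma glue_interleave3: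
  "glue r (interleave3 x y z) (interleave3 x' y' z') =
   interleave3 (glue (r div 3) x x') (glue ((r-1) div 3) y y') (glue ((r-2) div 3) z z')"
proof
  fix s
  show "glue r (interleave3 x y z) (interleave3 x' y' z') s =
    interleave3 (glue (r div 3) x x') (glue ((r-1) div 3) y y') (glue ((r-2) div 3) z z') s"
  proof (cases s rule: int_cases_mod3)
    case (1 j)
    moreover have "3*j \<le> r \<longleftrightarrow> j \<le> r div 3" by presburger
    ultimately show ?thesis by (simp add: interleave3_def glue_def)
  next
    case (2 j)
    moreover have "3*j + 1 \<le> r \<longleftrightarrow> j \<le> (r-1) div 3" by presburger
    ultimately show ?thesis by (simp add: interleave3_def glue_def)
  next
    case (3 j)
    moreover have "3*j + 2 \<le> r \<longleftrightarrow> j \<le> (r-2) div 3" by presburger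
    ultimately show ?thesis by (simp add: interleave3_def glue_def)
  qed
qed

locale elem_conj_triangle =
  e1: elem_conj A B \<phi>1 + e2: elem_conj B C \<phi>2 + e3: elem_conj A C \<phi>3
  for A B C \<phi>1 \<phi>2 \<phi>3
begin

lemma comp_eq_if_mult_eqs:
  assumes RR: "R_mat A B \<phi>1 * R_mat B C \<phi>2 = R_mat A C \<phi>3"
    and RS: "R_mat B C \<phi>2 * S_mat A C \<phi>3 = S_mat A B \<phi>1"
    and SR: "S_mat A C \<phi>3 * R_mat A B \<phi>1 = S_mat B C \<phi>2"
    and x: "x \<in> shift_space A"
  shows "\<phi>2 (\<phi>1 x) = \<phi>3 x"
proof
  fix i
  have y: "\<phi>1 x \<in> shift_space B"
    using x by (rule e1.\<phi>_in)
  define a a' b b' c where "a = x i" "a' = x (i+1)" "b = \<phi>1 x i" "b' = \<phi>1 x (i+1)" "c = \<phi>3 x i"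
  have bounds: "a < dim_row A" "a' < dim_row A" "b < dim_row B" "b' < dim_row B" "c < dim_row C"
    using x y e3.\<phi>_in[OF x] shift_space_lt unfolding a_a'_b_b'_c_def by blast+
  have R1: "R_mat A B \<phi>1 $$ (a,b) = 1" and R1': "R_mat A B \<phi>1 $$ (a',b') = 1"
    and S1: "S_mat A B \<phi>1 $$ (b,a') = 1" and S3: "S_mat A C \<phi>3 $$ (c,a') = 1"
    using x bounds e1.R_mat_eq_1_iff e1.S_mat_eq_1_iff e3.S_mat_eq_1_iff
    unfolding a_a'_b_b'_c_def by blast+
  note RR_iff = zero_one_mult_eq_iff[OF zero_one_mat_R_mat zero_one_mat_R_mat zero_one_mat_R_mat]
  note RS_iff = zero_one_mult_eq_iff[OF zero_one_mat_R_mat zero_one_mat_S_mat zero_one_mat_S_mat]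
  note SR_iff = zero_one_mult_eq_iff[OF zero_one_mat_S_mat zero_one_mat_R_mat zero_one_mat_S_mat]
  have S2: "S_mat B C \<phi>2 $$ (c,b') = 1"
    using SR_iff[THEN iffD1, OF _ _ _ SR] bounds S3 R1' by auto
  obtain c' where c': "c' < dim_row C" "R_mat B C \<phi>2 $$ (b,c') = 1" "S_mat A C \<phi>3 $$ (c',a') = 1"
    using RS_iff[THEN iffD1, OF _ _ _ RS] bounds S1 by auto
  have "R_mat A C \<phi>3 $$ (a,c') = 1"
    using RR_iff[THEN iffD1, OF _ _ _ RR] bounds R1 c' by auto
  then have "c' = c"
    using e3.\<phi>_eq_if_R_S c' bounds x unfolding a_a'_b_b'_c_def by blast
  then show "\<phi>2 (\<phi>1 x) i = \<phi>3 x i"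
    using e2.\<phi>_eq_if_R_S[OF _ S2] c' bounds y unfolding a_a'_b_b'_c_def by blast
qed

end

locale elem_conj_composition = elem_conj_triangle +
  assumes comp: "\<And>x. x \<in> shift_space A \<Longrightarrow> \<phi>2 (\<phi>1 x) = \<phi>3 x"
begin

lemma \<phi>1_eq_\<psi>2_\<phi>3: "x \<in> shift_space A \<Longrightarrow> \<phi>1 x = e2.\<psi> (\<phi>3 x)"
  using comp e1.\<phi>_in by (metis e2.\<psi>_\<phi>)

lemma \<phi>3_\<psi>1_eq_\<phi>2: "y \<in> shift_space B \<Longrightarrow> \<phi>3 (e1.\<psi> y) = \<phi>2 y"
  using comp e1.\<psi>_in by (metis e1.\<phi>_\<psi>)

definition interleaving :: "(int \<Rightarrow> nat) \<Rightarrow> int \<Rightarrow> nat" where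
  "interleaving x = interleave3 x (\<phi>1 x) (\<phi>3 x)"

lemma interleaving_simps [simp]:
  "interleaving x (3*i) = x i" "interleaving x (3*i+1) = \<phi>1 x i"
  "interleaving x (3*i+2) = \<phi>3 x i"
  by (simp_all add: interleaving_def interleave3_def)

lemma glue_interleaving_at_A:
  assumes "x \<in> shift_space A" "x' \<in> shift_space A" "x i = x' i"
  shows "glue (3*i) (interleaving x) (interleaving x') = interleaving (glue i x x')"
proof -
  have "(3*i - 1) div 3 = i - 1" "(3*i - 2) div 3 = i - 1"
    by presburger+
  then show ?thesis
    using assms by (simp add: interleaving_def glue_interleave3 e1.\<phi>_glue e3.\<phi>_glue)
qed

text \<open>Here x and x' need not agree anywhere; the glued sequence is nevertheless in X_A, as the
  preimage of a sequence glued in X_B. The same device proves glue_interleaving_at_C.\<close>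

lemma glue_interleaving_at_B:
  assumes x: "x \<in> shift_space A" "x' \<in> shift_space A" and agree: "\<phi>1 x i = \<phi>1 x' i"
  shows "glue i x x' \<in> shift_space A"
    and "glue (3*i+1) (interleaving x) (interleaving x') = interleaving (glue i x x')"
proof -
  let ?u = "glue i (\<phi>1 x) (\<phi>1 x')"
  have "?u \<in> shift_space B" and "glue i x x' = e1.\<psi> ?u"
    using x agree by (simp_all add: glue_in_shift_space e1.\<phi>_in e1.\<psi>_glue)
  then have "glue i x x' \<in> shift_space A" "\<phi>1 (glue i x x') = ?u"
    and "\<phi>3 (glue i x x') = glue (i-1) (\<phi>3 x) (\<phi>3 x')"
    using x agree by (simp_all add: e1.\<psi>_in \<phi>3_\<psi>1_eq_\<phi>2 e2.\<phi>_glue e1.\<phi>_in comp)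
  moreover have "(3*i + 1 - 2) div 3 = i - 1"
    by presburger
  ultimately show "glue i x x' \<in> shift_space A"
    and "glue (3*i+1) (interleaving x) (interleaving x') = interleaving (glue i x x')"
    by (simp_all add: interleaving_def glue_interleave3)
qed

lemma glue_interleaving_at_C:
  assumes x: "x \<in> shift_space A" "x' \<in> shift_space A" and agree: "\<phi>3 x i = \<phi>3 x' i"
  shows "glue i x x' \<in> shift_space A"
    and "glue (3*i+2) (interleaving x) (interleaving x') = interleaving (glue i x x')"
proof -
  let ?t = "glue i (\<phi>3 x) (\<phi>3 x')"
  have "?t \<in> shift_space C" and "glue i x x' = e3.\<psi> ?t"
    using x agree by (simp_all add: glue_in_shift_space e3.\<phi>_in e3.\<psi>_glue)
  then have "glue i x x' \<in> shift_space A" "\<phi>3 (glue i x x') = ?t"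
    and "\<phi>1 (glue i x x') = glue i (\<phi>1 x) (\<phi>1 x')"
    using x agree by (simp_all add: e3.\<psi>_in \<phi>1_eq_\<psi>2_\<phi>3 e2.\<psi>_glue e3.\<phi>_in)
  then show "glue i x x' \<in> shift_space A"
    and "glue (3*i+2) (interleaving x) (interleaving x') = interleaving (glue i x x')"
    by (simp_all add: interleaving_def glue_interleave3)
qed

abbreviation interleavings :: "(int \<Rightarrow> nat) set" where
  "interleavings \<equiv> interleaving ` shift_space A"

lemma glue_interleavings:
  assumes "w \<in> interleavings" "w' \<in> interleavings" "w r = w' r"
  shows "glue r w w' \<in> interleavings"
proof -
  obtain x x' where x: "x \<in> shift_space A" "x' \<in> shift_space A"
    and w: "w = interleaving x" "w' = interleaving x'"
    using assms(1,2) by blast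
  have "\<exists>v\<in>shift_space A. glue r w w' = interleaving v"
  proof (cases r rule: int_cases_mod3)
    case (1 i)
    then have "x i = x' i"
      using assms(3) w by simp
    then show ?thesis
      using 1 w x glue_interleaving_at_A glue_in_shift_space by blast
  next
    case (2 i)
    then have "\<phi>1 x i = \<phi>1 x' i"
      using assms(3) w by simp
    then show ?thesis
      using 2 w x glue_interleaving_at_B by blast
  next
    case (3 i)
    then have "\<phi>3 x i = \<phi>3 x' i"
      using assms(3) w by simp
    then show ?thesis
      using 3 w x glue_interleaving_at_C by blast
  qed
  then show ?thesis
    by blast
qed

lemma interleaving_determined:
  assumes x: "x \<in> shift_space A" "x' \<in> shift_space A"
    and "interleaving x r = interleaving x' r" "interleaving x (r+3) = interleaving x' (r+3)"
  shows "interleaving x (r+2) = interleaving x' (r+2)"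
proof (cases r rule: int_cases_mod3)
  case (1 i)
  then show ?thesis
    using assms by (simp add: interleaving_def interleave3_def e3.\<phi>_apply)
next
  case (2 i)
  have "x (i+1) = inv_loc_rule A B \<phi>1 (\<phi>1 x i) (\<phi>1 x (i+1))"
    and "x' (i+1) = inv_loc_rule A B \<phi>1 (\<phi>1 x' i) (\<phi>1 x' (i+1))"
    using e1.\<psi>_apply[OF e1.\<phi>_in, of _ "i+1"] x by simp_all
  then show ?thesis
    using assms 2 by (simp add: interleaving_def interleave3_def add.commute)
next
  case (3 i)
  have "\<phi>1 x (i+1) = inv_loc_rule B C \<phi>2 (\<phi>3 x i) (\<phi>3 x (i+1))"
    and "\<phi>1 x' (i+1) = inv_loc_rule B C \<phi>2 (\<phi>3 x' i) (\<phi>3 x' (i+1))"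
    using e2.\<psi>_apply[OF e3.\<phi>_in, of _ "i+1"] \<phi>1_eq_\<psi>2_\<phi>3 x by simp_all
  then show ?thesis
    using assms 3 by (simp add: interleaving_def interleave3_def add.commute)
qed

lemma interleavings_middle:
  assumes w: "w \<in> interleavings" "w' \<in> interleavings"
    and agree: "w r = w' r" "w (r+2) = w' (r+2)"
  shows "w (r+1) = w' (r+1)"
proof -
  obtain v where v: "v \<in> shift_space A" "glue r w w' = interleaving v"
    using glue_interleavings[OF w agree(1)] by blast
  obtain x where x: "x \<in> shift_space A" "w = interleaving x"
    using w(1) by blast
  have "interleaving v (r-1) = interleaving x (r-1)" "interleaving v (r+2) = interleaving x (r+2)"
    using v(2)[symmetric] x(2) agree(2) by simp_all
  then have "interleaving v (r+1) = interleaving x (r+1)"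
    using interleaving_determined[OF v(1) x(1), of "r-1"] by (simp add: add.commute)
  then show ?thesis
    using v(2)[symmetric] x(2) by simp
qed

lemma interleaving_lt:
  assumes "x \<in> shift_space A"
  shows "interleaving x (3*k) < dim_row A" "interleaving x (3*k+1) < dim_row B"
    "interleaving x (3*k+2) < dim_row C"
  using assms e1.\<phi>_in e3.\<phi>_in by (simp_all add: interleaving_def interleave3_def shift_space_lt)

lemma bex_shift_space_B_iff:
  "(\<exists>y\<in>shift_space B. P y) \<longleftrightarrow> (\<exists>x\<in>shift_space A. P (\<phi>1 x))"
proof
  assume "\<exists>y\<in>shift_space B. P y"
  then obtain y where "y \<in> shift_space B" "P y" by blast
  then show "\<exists>x\<in>shift_space A. P (\<phi>1 x)"
    by (intro bexI[of _ "e1.\<psi> y"]) (simp_all add: e1.\<psi>_in)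
qed (use e1.\<phi>_in in blast)

lemma R1_eq_1_iff: "a < dim_row A \<Longrightarrow> b < dim_row B \<Longrightarrow>
  R_mat A B \<phi>1 $$ (a,b) = 1 \<longleftrightarrow> (\<exists>w\<in>interleavings. w (3*k) = a \<and> w (3*k+1) = b)"
  using e1.R_mat_eq_1_iff[of a b k] by (simp add: interleaving_def interleave3_def)

lemma R2_eq_1_iff: "b < dim_row B \<Longrightarrow> c < dim_row C \<Longrightarrow>
  R_mat B C \<phi>2 $$ (b,c) = 1 \<longleftrightarrow> (\<exists>w\<in>interleavings. w (3*k+1) = b \<and> w (3*k+2) = c)"
  using e2.R_mat_eq_1_iff[of b c k]
  by (simp add: bex_shift_space_B_iff comp interleaving_def interleave3_def)

lemma R3_eq_1_iff: "a < dim_row A \<Longrightarrow> c < dim_row C \<Longrightarrow>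
  R_mat A C \<phi>3 $$ (a,c) = 1 \<longleftrightarrow> (\<exists>w\<in>interleavings. w (3*k) = a \<and> w (3*k+2) = c)"
  using e3.R_mat_eq_1_iff[of a c k] by (simp add: interleaving_def interleave3_def)

lemma S1_eq_1_iff: "a < dim_row A \<Longrightarrow> b < dim_row B \<Longrightarrow>
  S_mat A B \<phi>1 $$ (b,a) = 1 \<longleftrightarrow> (\<exists>w\<in>interleavings. w (3*k+1) = b \<and> w (3*k+3) = a)"
  using e1.S_mat_eq_1_iff[of a b k] by (simp add: interleaving_def interleave3_def)

lemma S2_eq_1_iff: "b < dim_row B \<Longrightarrow> c < dim_row C \<Longrightarrow>
  S_mat B C \<phi>2 $$ (c,b) = 1 \<longleftrightarrow> (\<exists>w\<in>interleavings. w (3*k+2) = c \<and> w (3*k+4) = b)"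
  using e2.S_mat_eq_1_iff[of b c k]
  by (simp add: bex_shift_space_B_iff comp interleaving_def interleave3_def)

lemma S3_eq_1_iff: "a < dim_row A \<Longrightarrow> c < dim_row C \<Longrightarrow>
  S_mat A C \<phi>3 $$ (c,a) = 1 \<longleftrightarrow> (\<exists>w\<in>interleavings. w (3*k+2) = c \<and> w (3*k+3) = a)"
  using e3.S_mat_eq_1_iff[of a c k] by (simp add: interleaving_def interleave3_def)

lemma R1_R2_eq_R3: "R_mat A B \<phi>1 * R_mat B C \<phi>2 = R_mat A C \<phi>3"
proof (rule zero_one_mult_eq_if_realized[where W = interleavings and q = 0])
  show "w (0+1) < dim_row (R_mat B C \<phi>2)" if "w \<in> interleavings" for w
    using that interleaving_lt(2)[of _ 0] by auto
  show "w (0+1) = w' (0+1)"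
    if "w \<in> interleavings" "w' \<in> interleavings" "w 0 = w' 0" "w (0+2) = w' (0+2)" for w w'
    using interleavings_middle[OF that] by simp
qed (simp_all add: zero_one_mat_R_mat glue_interleavings
       R1_eq_1_iff[where k = 0] R2_eq_1_iff[where k = 0] R3_eq_1_iff[where k = 0])

lemma R2_S3_eq_S1: "R_mat B C \<phi>2 * S_mat A C \<phi>3 = S_mat A B \<phi>1"
proof (rule zero_one_mult_eq_if_realized[where W = interleavings and q = 1])
  show "w (1+1) < dim_row (S_mat A C \<phi>3)" if "w \<in> interleavings" for w
    using that interleaving_lt(3)[of _ 0] by auto
  show "w (1+1) = w' (1+1)"
    if "w \<in> interleavings" "w' \<in> interleavings" "w 1 = w' 1" "w (1+2) = w' (1+2)" for w w'
    using interleavings_middle[OF that] by simp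
qed (simp_all add: zero_one_mat_R_mat zero_one_mat_S_mat glue_interleavings
       R2_eq_1_iff[where k = 0] S3_eq_1_iff[where k = 0] S1_eq_1_iff[where k = 0])

lemma S3_R1_eq_S2: "S_mat A C \<phi>3 * R_mat A B \<phi>1 = S_mat B C \<phi>2"
proof (rule zero_one_mult_eq_if_realized[where W = interleavings and q = 2])
  show "w (2+1) < dim_row (R_mat A B \<phi>1)" if "w \<in> interleavings" for w
    using that interleaving_lt(1)[of _ 1] by auto
  show "w (2+1) = w' (2+1)"
    if "w \<in> interleavings" "w' \<in> interleavings" "w 2 = w' 2" "w (2+2) = w' (2+2)" for w w'
    using interleavings_middle[OF that] by simp
qed (simp_all add: zero_one_mat_R_mat zero_one_mat_S_mat glue_interleavings
       S3_eq_1_iff[where k = 0] R1_eq_1_iff[where k = 1] S2_eq_1_iff[where k = 0])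

end

theorem mainTheorem11:
  fixes A B C :: "int mat"
    and \<phi>1 \<phi>2 \<phi>3 :: "(int \<Rightarrow> nat) \<Rightarrow> (int \<Rightarrow> nat)"
  assumes "square_01_nondeg A" "square_01_nondeg B" "square_01_nondeg C"
    and "elementary_conjugacy A B \<phi>1"
    and "elementary_conjugacy B C \<phi>2"
    and "elementary_conjugacy A C \<phi>3"
  shows "(\<forall>x\<in>shift_space A. \<phi>2 (\<phi>1 x) = \<phi>3 x) \<longleftrightarrow>
         (R_mat A B \<phi>1 * R_mat B C \<phi>2 = R_mat A C \<phi>3 \<and>
          R_mat B C \<phi>2 * S_mat A C \<phi>3 = S_mat A B \<phi>1 \<and>
          S_mat A C \<phi>3 * R_mat A B \<phi>1 = S_mat B C \<phi>2)"
proof -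
  interpret elem_conj_triangle A B C \<phi>1 \<phi>2 \<phi>3
    using assms by (simp add: elem_conj_triangle_def elem_conj_def)
  show ?thesis
  proof
    assume "\<forall>x\<in>shift_space A. \<phi>2 (\<phi>1 x) = \<phi>3 x"
    then interpret elem_conj_composition A B C \<phi>1 \<phi>2 \<phi>3
      by unfold_locales blast
    show "R_mat A B \<phi>1 * R_mat B C \<phi>2 = R_mat A C \<phi>3 \<and>
          R_mat B C \<phi>2 * S_mat A C \<phi>3 = S_mat A B \<phi>1 \<and>
          S_mat A C \<phi>3 * R_mat A B \<phi>1 = S_mat B C \<phi>2"
      using R1_R2_eq_R3 R2_S3_eq_S1 S3_R1_eq_S2 by blast
  qed (use comp_eq_if_mult_eqs in blast)
qed

end
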